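(* Let $\alpha,\beta,p\in\mathbb{C}$ be constants and let $h,g:\mathbb{Z}^2\to\mathbb{C}$ satisfy $\widehat{h}-\widetilde{h}=\widetilde{\widetilde{g}}-g$ and $(h+\widetilde g)g=\beta^2-\alpha^2$. Let $\varphi$ solve the Lax pair $$\widetilde{\widetilde{\varphi}}+h\,\widetilde{\varphi}+\alpha^2\varphi=p^2\varphi,\qquad \widehat{\varphi}=\widetilde{\varphi}-g\,\varphi,$$ and let $\varphi^*$ solve the adjoint Lax pair $$\widetilde{\widetilde{\varphi^*}}-h\,\widetilde{\varphi^*}+\alpha^2\varphi^*=p^2\varphi^*,\qquad \widehat{\varphi^*}=\widetilde{\varphi^*}+g\,\varphi^* .$$ Then there is a constant $\rho$ such that for all $n,m\in\mathbb{Z}$ $$\varphi\,\widetilde{\varphi^*}+\varphi^*\widetilde{\varphi}=\varphi\,\widehat{\varphi^*}+\varphi^*\widehat{\varphi}=(-1)^{n+m}\rho\,s^{2n}t^{2m},$$ where $s^2=\alpha^2-p^2$, $t^2=\beta^2-p^2$. If $\varphi^*$ is proportional to $(-1)^{n+m}\varphi$, then $\rho=0$.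
   Context: Shift notation: for a function $f$ on $\mathbb{Z}^2$ (variables $n,m$), $\widetilde f(n,m)=f(n+1,m)$, $\widehat f(n,m)=f(n,m+1)$, and combined accents denote composed shifts. *)

theory Defs
  imports Complex_Main
begin

end

theory Submission
  imports Defs
begin

text \<open>Put \<open>F = \<phi> \<phi>s~ + \<phi>s \<phi>~\<close>. In \<open>F~\<close> the middle terms \<open>h\<close> and \<open>-h\<close> of the two
  three-term equations cancel, leaving \<open>F~ = -s\<^sup>2 F\<close>. The two evolution equations give
  \<open>\<phi> \<phi>s^ + \<phi>s \<phi>^ = F\<close> and \<open>F^ = -(s\<^sup>2 + (h + g~) g) F = -t\<^sup>2 F\<close>. Solving these first-order
  recurrences on the lattice yields the claimed form with \<open>\<rho> = F(0,0)\<close>; if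
  \<open>\<phi>s = c (-1)\<^sup>n\<^sup>+\<^sup>m \<phi>\<close>, the two summands of \<open>F(0,0)\<close> cancel.\<close>

definition shift_pairing :: "(int \<Rightarrow> 'a::comm_ring_1) \<Rightarrow> (int \<Rightarrow> 'a) \<Rightarrow> int \<Rightarrow> 'a" where
  "shift_pairing u v n = u n * v (n + 1) + v n * u (n + 1)"

lemma power_int_recurrence:
  fixes x :: "int \<Rightarrow> 'a::field"
  assumes step: "\<And>n. x (n + 1) = c * x n"
  shows "x n = c powi n * x 0"
proof (cases "c = 0")
  case True
  then show ?thesis using step[of "n - 1"] by (cases "n = 0") simp_all
next
  case False
  show ?thesis
  proof (induction n rule: int_induct[where k = 0])
    case base
    then show ?case by simp
  next
    case (step1 i)
    then show ?case using step[of i] False by (simp add: power_int_add)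
  next
    case (step2 i)
    have "x (i - 1) = x i / c" using step[of "i - 1"] False by (simp add: field_simps)
    then show ?case using step2 False by (simp add: power_int_diff)
  qed
qed

lemma power_int_recurrence2:
  fixes F :: "int \<Rightarrow> int \<Rightarrow> 'a::field"
  assumes "\<And>n m. F (n + 1) m = a * F n m"
    and "\<And>n m. F n (m + 1) = b * F n m"
  shows "F n m = a powi n * b powi m * F 0 0"
proof -
  have "F n m = a powi n * F 0 m"
    using power_int_recurrence[of "\<lambda>k. F k m"] assms(1) by blast
  also have "F 0 m = b powi m * F 0 0"
    using power_int_recurrence[of "F 0"] assms(2) by blast
  finally show ?thesis by simp
qed

lemma shift_pairing_adjoint_three_term:
  fixes u v :: "int \<Rightarrow> 'a::comm_ring_1"
  assumes "u (n + 2) + k * u (n + 1) + c * u n = 0"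
    and "v (n + 2) - k * v (n + 1) + c * v n = 0"
  shows "shift_pairing u v (n + 1) = - c * shift_pairing u v n"
proof -
  have u2: "u (n + 2) = - k * u (n + 1) - c * u n" and v2: "v (n + 2) = k * v (n + 1) - c * v n"
    using assms by (simp_all add: algebra_simps eq_neg_iff_add_eq_0)
  have shift: "n + 1 + 1 = n + 2" by simp
  show ?thesis
    unfolding shift_pairing_def shift u2 v2 by (simp add: algebra_simps)
qed

lemma shift_pairing_adjoint_evolution:
  fixes u v u' v' g :: "int \<Rightarrow> 'a::comm_ring_1"
  assumes u': "\<And>j. u' j = u (j + 1) - g j * u j"
    and v': "\<And>j. v' j = v (j + 1) + g j * v j"
    and "u (n + 2) + k * u (n + 1) + c * u n = 0"
    and "v (n + 2) - k * v (n + 1) + c * v n = 0"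
    and "(k + g (n + 1)) * g n = d"
  shows "shift_pairing u' v' n = - (c + d) * shift_pairing u v n"
proof -
  have u2: "u (n + 2) = - k * u (n + 1) - c * u n" and v2: "v (n + 2) = k * v (n + 1) - c * v n"
    using assms(3,4) by (simp_all add: algebra_simps eq_neg_iff_add_eq_0)
  have "n + 1 + 1 = n + 2" by simp
  then have "shift_pairing u' v' n
      = (u (n + 1) - g n * u n) * (v (n + 2) + g (n + 1) * v (n + 1))
        + (v (n + 1) + g n * v n) * (u (n + 2) - g (n + 1) * u (n + 1))"
    unfolding shift_pairing_def u' v' by (simp only:)
  also have "\<dots> = - c * shift_pairing u v n - (k + g (n + 1)) * g n * shift_pairing u v n"
    unfolding u2 v2 shift_pairing_def by (simp add: algebra_simps)
  finally show ?thesis unfolding assms(5)[symmetric] by (simp add: algebra_simps)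
qed

text \<open>Only \<open>compat2\<close> enters the argument.\<close>

theorem lemma3p1:
  fixes \<alpha> \<beta> p :: complex
    and h g \<phi> \<phi>s :: "int \<Rightarrow> int \<Rightarrow> complex"
  assumes compat1: "\<And>n m. h n (m + 1) - h (n + 1) m = g (n + 2) m - g n m"
    and compat2: "\<And>n m. (h n m + g (n + 1) m) * g n m = \<beta>\<^sup>2 - \<alpha>\<^sup>2"
    and lax1: "\<And>n m. \<phi> (n + 2) m + h n m * \<phi> (n + 1) m + \<alpha>\<^sup>2 * \<phi> n m = p\<^sup>2 * \<phi> n m"
    and lax2: "\<And>n m. \<phi> n (m + 1) = \<phi> (n + 1) m - g n m * \<phi> n m"
    and adj1: "\<And>n m. \<phi>s (n + 2) m - h n m * \<phi>s (n + 1) m + \<alpha>\<^sup>2 * \<phi>s n m = p\<^sup>2 * \<phi>s n m"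
    and adj2: "\<And>n m. \<phi>s n (m + 1) = \<phi>s (n + 1) m + g n m * \<phi>s n m"
  shows "\<exists>\<rho>::complex.
     (\<forall>n m. \<phi> n m * \<phi>s (n + 1) m + \<phi>s n m * \<phi> (n + 1) m
              = (-1) powi (n + m) * \<rho> * (\<alpha>\<^sup>2 - p\<^sup>2) powi n * (\<beta>\<^sup>2 - p\<^sup>2) powi m
          \<and> \<phi> n m * \<phi>s n (m + 1) + \<phi>s n m * \<phi> n (m + 1)
              = (-1) powi (n + m) * \<rho> * (\<alpha>\<^sup>2 - p\<^sup>2) powi n * (\<beta>\<^sup>2 - p\<^sup>2) powi m)
   \<and> ((\<exists>c::complex. \<forall>n m. \<phi>s n m = c * (-1) powi (n + m) * \<phi> n m) \<longrightarrow> \<rho> = 0)"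
proof -
  define a where "a = \<alpha>\<^sup>2 - p\<^sup>2"
  define b where "b = \<beta>\<^sup>2 - p\<^sup>2"
  define F where "F n m = shift_pairing (\<lambda>k. \<phi> k m) (\<lambda>k. \<phi>s k m) n" for n m
  have three_term: "\<phi> (n + 2) m + h n m * \<phi> (n + 1) m + a * \<phi> n m = 0"
    "\<phi>s (n + 2) m - h n m * \<phi>s (n + 1) m + a * \<phi>s n m = 0" for n m
    using lax1[of n m] adj1[of n m] unfolding a_def by (simp_all add: algebra_simps)
  have "F (n + 1) m = - a * F n m" for n m
    unfolding F_def using three_term
    by (intro shift_pairing_adjoint_three_term[where k = "h n m"])
  moreover have "F n (m + 1) = - b * F n m" for n m
  proof -
    have "(h n m + g (n + 1) m) * g n m = b - a"
      using compat2[of n m] by (simp add: a_def b_def)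
    then have "F n (m + 1) = - (a + (b - a)) * F n m"
      unfolding F_def using lax2 adj2 three_term
      by (intro shift_pairing_adjoint_evolution[where g = "\<lambda>k. g k m" and k = "h n m"])
    then show ?thesis by simp
  qed
  ultimately have F_geometric: "F n m = (-a) powi n * (-b) powi m * F 0 0" for n m
    by (rule power_int_recurrence2)
  have F: "F n m = (-1) powi (n + m) * F 0 0 * a powi n * b powi m" for n m
    using F_geometric[of n m] power_int_mult_distrib[of "-1" a n] power_int_mult_distrib[of "-1" b m]
    by (simp add: power_int_add)
  show ?thesis
  proof (intro exI[of _ "F 0 0"] conjI allI impI)
    fix n m
    show "\<phi> n m * \<phi>s (n + 1) m + \<phi>s n m * \<phi> (n + 1) m
        = (-1) powi (n + m) * F 0 0 * (\<alpha>\<^sup>2 - p\<^sup>2) powi n * (\<beta>\<^sup>2 - p\<^sup>2) powi m"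
      using F[of n m] unfolding F_def shift_pairing_def a_def b_def .
    show "\<phi> n m * \<phi>s n (m + 1) + \<phi>s n m * \<phi> n (m + 1)
        = (-1) powi (n + m) * F 0 0 * (\<alpha>\<^sup>2 - p\<^sup>2) powi n * (\<beta>\<^sup>2 - p\<^sup>2) powi m"
      using F[of n m] unfolding F_def shift_pairing_def a_def b_def lax2 adj2
      by (simp add: algebra_simps)
  next
    assume "\<exists>c. \<forall>n m. \<phi>s n m = c * (-1) powi (n + m) * \<phi> n m"
    then obtain c where "\<And>n m. \<phi>s n m = c * (-1) powi (n + m) * \<phi> n m" by blast
    then show "F 0 0 = 0" unfolding F_def shift_pairing_def by (simp add: algebra_simps)
  qed
qed

end
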